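(* Let $\lambda\in(0,1)$ and let $G$ be a finite simple connected graph with $n\ge 3$ vertices. Then $$\min_{2\le D\le n-1}\frac{\lambda^{D}+\frac{1}{n-D}\cdot\frac{\lambda^{D}-\lambda}{\lambda-1}}{D\lambda^{D}+\frac{1}{n-D}\cdot\frac{\lambda-D\lambda^{D}+(D-1)\lambda^{D+1}}{(\lambda-1)^2}}\;\le\; mN^{e}_{\lambda}(G)\;\le\;1.$$ The lower bound is attained for a broom on $n$ vertices (at its starting vertex), and the upper bound is attained for every vertex-transitive graph.
   Context: $d(u,v)$ denotes graph distance and $[u]$ the set of neighbours of $u$. $t^{e}_{\lambda}(u)=\sum_{v\in V\setminus\{u\}} d(u,v)\lambda^{d(u,v)}$. For vertices $k,l$, $s^{kl}$ is the number of shortest $k$–$l$ paths and, for an edge $uv$, $s^{kl}_{uv}$ is the number of those passing through the edge $uv$. The exponential edge betweenness of an edge $uv$ is $b^{e}_{\lambda}(uv)=\sum_{\{k,l\}}\frac{s^{kl}_{uv}}{s^{kl}}\lambda^{d(k,l)}$ over all unordered pairs $\{k,l\}$ of distinct vertices; $c^{e}_{\lambda}(u)=\sum_{v\in[u]}b^{e}_{\lambda}(uv)$. The networkness of $u$ is $N^{e}_{\lambda}(u)=c^{e}_{\lambda}(u)/t^{e}_{\lambda}(u)$ and $mN^{e}_{\lambda}(G)=\min\{N^{e}_{\lambda}(u):u\in V(G)\}$. A broom on $n$ vertices (with parameter $D$, $1\le D\le n-1$) is the graph consisting of a path $u=v_0v_1\cdots v_D$ together with $n-D-1$ further vertices each adjacent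 only to $v_{D-1}$; $u=v_0$ is its starting vertex. *)

theory Defs
  imports Main "HOL.Real"
begin

definition simple_graph :: "'a set \<Rightarrow> ('a \<Rightarrow> 'a \<Rightarrow> bool) \<Rightarrow> bool" where
  "simple_graph V E \<longleftrightarrow> finite V \<and> (\<forall>x y. E x y \<longrightarrow> x \<in> V \<and> y \<in> V)
     \<and> (\<forall>x y. E x y \<longrightarrow> E y x) \<and> (\<forall>x. \<not> E x x)"

definition walk :: "'a set \<Rightarrow> ('a \<Rightarrow> 'a \<Rightarrow> bool) \<Rightarrow> 'a list \<Rightarrow> bool" where
  "walk V E p \<longleftrightarrow> p \<noteq> [] \<and> set p \<subseteq> V \<and> (\<forall>i. Suc i < length p \<longrightarrow> E (p ! i) (p ! Suc i))"

definition connected_graph :: "'a set \<Rightarrow> ('a \<Rightarrow> 'a \<Rightarrow> bool) \<Rightarrow> bool" where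
  "connected_graph V E \<longleftrightarrow> (\<forall>u\<in>V. \<forall>v\<in>V. \<exists>p. walk V E p \<and> hd p = u \<and> last p = v)"

definition gdist :: "'a set \<Rightarrow> ('a \<Rightarrow> 'a \<Rightarrow> bool) \<Rightarrow> 'a \<Rightarrow> 'a \<Rightarrow> nat" where
  "gdist V E u v = (LEAST k. \<exists>p. walk V E p \<and> hd p = u \<and> last p = v \<and> length p = Suc k)"

definition shortest_paths :: "'a set \<Rightarrow> ('a \<Rightarrow> 'a \<Rightarrow> bool) \<Rightarrow> 'a \<Rightarrow> 'a \<Rightarrow> 'a list set" where
  "shortest_paths V E k l = {p. walk V E p \<and> hd p = k \<and> last p = l \<and> length p = Suc (gdist V E k l)}"

definition nsp :: "'a set \<Rightarrow> ('a \<Rightarrow> 'a \<Rightarrow> bool) \<Rightarrow> 'a \<Rightarrow> 'a \<Rightarrow> nat" where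
  "nsp V E k l = card (shortest_paths V E k l)"

definition nsp_edge :: "'a set \<Rightarrow> ('a \<Rightarrow> 'a \<Rightarrow> bool) \<Rightarrow> 'a \<Rightarrow> 'a \<Rightarrow> 'a \<Rightarrow> 'a \<Rightarrow> nat" where
  "nsp_edge V E k l u v = card {p \<in> shortest_paths V E k l.
      \<exists>i. Suc i < length p \<and> {p ! i, p ! Suc i} = {u, v}}"

text \<open>Exponential edge betweenness; the sum over unordered pairs {k,l} of distinct vertices
  is written as half of the sum over ordered pairs (the summand is symmetric in k,l).\<close>
definition exp_edge_betw :: "'a set \<Rightarrow> ('a \<Rightarrow> 'a \<Rightarrow> bool) \<Rightarrow> real \<Rightarrow> 'a \<Rightarrow> 'a \<Rightarrow> real" where
  "exp_edge_betw V E lam u v = (1/2) * (\<Sum>k\<in>V. \<Sum>l\<in>V - {k}.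
      real (nsp_edge V E k l u v) / real (nsp V E k l) * lam ^ gdist V E k l)"

definition exp_c :: "'a set \<Rightarrow> ('a \<Rightarrow> 'a \<Rightarrow> bool) \<Rightarrow> real \<Rightarrow> 'a \<Rightarrow> real" where
  "exp_c V E lam u = (\<Sum>v\<in>{v\<in>V. E u v}. exp_edge_betw V E lam u v)"

definition exp_t :: "'a set \<Rightarrow> ('a \<Rightarrow> 'a \<Rightarrow> bool) \<Rightarrow> real \<Rightarrow> 'a \<Rightarrow> real" where
  "exp_t V E lam u = (\<Sum>v\<in>V - {u}. real (gdist V E u v) * lam ^ gdist V E u v)"

definition networkness :: "'a set \<Rightarrow> ('a \<Rightarrow> 'a \<Rightarrow> bool) \<Rightarrow> real \<Rightarrow> 'a \<Rightarrow> real" where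
  "networkness V E lam u = exp_c V E lam u / exp_t V E lam u"

definition min_networkness :: "'a set \<Rightarrow> ('a \<Rightarrow> 'a \<Rightarrow> bool) \<Rightarrow> real \<Rightarrow> real" where
  "min_networkness V E lam = Min (networkness V E lam ` V)"

definition vertex_transitive :: "'a set \<Rightarrow> ('a \<Rightarrow> 'a \<Rightarrow> bool) \<Rightarrow> bool" where
  "vertex_transitive V E \<longleftrightarrow> (\<forall>u\<in>V. \<forall>v\<in>V. \<exists>\<sigma>. bij_betw \<sigma> V V
      \<and> (\<forall>x\<in>V. \<forall>y\<in>V. E x y \<longleftrightarrow> E (\<sigma> x) (\<sigma> y)) \<and> \<sigma> u = v)"

text \<open>Broom on n vertices {0..<n} with parameter D: path 0-1-...-D, and vertices D+1..n-1
  each adjacent only to D-1. Starting vertex is 0.\<close>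
definition broom_V :: "nat \<Rightarrow> nat set" where
  "broom_V n = {0..<n}"

definition broom_E :: "nat \<Rightarrow> nat \<Rightarrow> nat \<Rightarrow> nat \<Rightarrow> bool" where
  "broom_E n D i j \<longleftrightarrow> i < n \<and> j < n \<and>
     ((j = Suc i \<and> j \<le> D) \<or> (i = Suc j \<and> i \<le> D) \<or> (D < i \<and> j = D - 1) \<or> (D < j \<and> i = D - 1))"

definition lb_fun :: "nat \<Rightarrow> real \<Rightarrow> nat \<Rightarrow> real" where
  "lb_fun n lam D =
     (lam ^ D + 1 / real (n - D) * ((lam ^ D - lam) / (lam - 1))) /
     (real D * lam ^ D + 1 / real (n - D) *
        ((lam - real D * lam ^ D + (real D - 1) * lam ^ (D + 1)) / (lam - 1)^2))"

end

theory Submission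
  imports Defs
begin

(* Let exp_reach u be the sum of lam^d(u,v) over v \<noteq> u. The pairs {k,l} having u as an endpoint
   contribute exactly exp_reach u to c(u), so c(u) \<ge> exp_reach u, with equality at a leaf. Hence
   N(u) \<ge> exp_reach u / t(u), a ratio depending only on the distance profile of u: n - 1 positive
   distances filling an interval {1..e}. Put x = t(u) / exp_reach u; then h i = (i - x) lam^i sums
   to zero over the profile. Since every level 1..e occurs, the sum of h over the clipped profile
   min i j (i = 1..n-1), for a maximiser j of h, is at least that, hence nonnegative; this says that
   x is at most the ratio t / exp_reach of the clipped profile. The clipped profile is the profile of
   the start vertex of a broom and gives the closed-form lower bound.
   For the upper bound, a shortest path of length d crosses d edges, so counting edge traversals
   gives sum_u c(u) = sum_u t(u); thus some N(u) \<le> 1, and N is constant on a vertex transitive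
   graph. *)

lemma walk_singleton [simp]: "walk V E [x] \<longleftrightarrow> x \<in> V"
  by (auto simp: walk_def)

lemma walk_Cons_Cons: "walk V E (x # y # p) \<longleftrightarrow> x \<in> V \<and> E x y \<and> walk V E (y # p)"
proof
  assume w: "walk V E (x # y # p)"
  have "E ((x # y # p) ! Suc i) ((x # y # p) ! Suc (Suc i))" if "Suc i < length (y # p)" for i
    using w that unfolding walk_def by (metis Suc_less_eq length_Cons)
  then have "walk V E (y # p)"
    using w by (auto simp: walk_def)
  moreover have "E x y"
    using w unfolding walk_def by (metis length_Cons nth_Cons_0 nth_Cons_Suc zero_less_Suc Suc_less_eq)
  ultimately show "x \<in> V \<and> E x y \<and> walk V E (y # p)"
    using w by (auto simp: walk_def)
next
  assume "x \<in> V \<and> E x y \<and> walk V E (y # p)"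
  then show "walk V E (x # y # p)"
    unfolding walk_def by (auto simp: less_Suc_eq_0_disj nth_Cons split: nat.splits)
qed

lemma walk_append:
  "walk V E p \<Longrightarrow> walk V E q \<Longrightarrow> E (last p) (hd q) \<Longrightarrow> walk V E (p @ q)"
proof (induction p rule: induct_list012)
  case 1
  then show ?case by (simp add: walk_def)
next
  case (2 x)
  then show ?case by (cases q) (auto simp: walk_Cons_Cons)
next
  case (3 x y zs)
  then show ?case by (auto simp: walk_Cons_Cons)
qed

lemma walk_append_tl:
  assumes "walk V E p" "walk V E q" "last p = hd q"
  shows "walk V E (p @ tl q)"
proof (cases "tl q")
  case Nil
  then show ?thesis using assms by simp
next
  case (Cons a r)
  have "q = hd q # a # r"
    using assms(2) Cons unfolding walk_def by (metis list.collapse)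
  then have "E (hd q) a" "walk V E (a # r)"
    using assms(2) by (metis walk_Cons_Cons)+
  then show ?thesis
    using assms Cons walk_append[of V E p "a # r"] by simp
qed

lemma last_append_tl: "last p = hd q \<Longrightarrow> q \<noteq> [] \<Longrightarrow> p \<noteq> [] \<Longrightarrow> last (p @ tl q) = last q"
  by (cases q) (auto simp: last_append)

lemma walk_rev:
  assumes sym: "\<And>x y. E x y \<Longrightarrow> E y x"
  shows "walk V E p \<Longrightarrow> walk V E (rev p)"
proof (induction p rule: induct_list012)
  case 1
  then show ?case by (simp add: walk_def)
next
  case (2 x)
  then show ?case by simp
next
  case (3 x y zs)
  then have "walk V E (rev (y # zs))" "E y x"
    using sym by (simp_all add: walk_Cons_Cons)
  then show ?case
    using walk_append[of V E "rev (y # zs)" "[x]"] 3 by (auto simp: walk_Cons_Cons)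
qed

lemma walk_take: "walk V E p \<Longrightarrow> 0 < k \<Longrightarrow> walk V E (take k p)"
  unfolding walk_def by (auto dest: in_set_takeD)

lemma walk_drop: "walk V E p \<Longrightarrow> k < length p \<Longrightarrow> walk V E (drop k p)"
  unfolding walk_def by (auto dest: in_set_dropD)

lemma walk_map:
  assumes "walk V E p" "s ` V \<subseteq> V'" "\<forall>x\<in>V. \<forall>y\<in>V. E x y \<longrightarrow> E' (s x) (s y)"
  shows "walk V' E' (map s p)"
  using assms unfolding walk_def by (auto simp: subset_iff)

lemma connected_graphI_root:
  assumes sym: "\<And>x y. E x y \<Longrightarrow> E y x"
    and root: "\<And>v. v \<in> V \<Longrightarrow> \<exists>p. walk V E p \<and> hd p = r \<and> last p = v"
  shows "connected_graph V E"
  unfolding connected_graph_def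
proof (intro ballI)
  fix u v
  assume "u \<in> V" "v \<in> V"
  then obtain p q where p: "walk V E p" "hd p = r" "last p = u" and q: "walk V E q" "hd q = r" "last q = v"
    using root by blast
  have ne: "p \<noteq> []" "q \<noteq> []"
    using p(1) q(1) by (auto simp: walk_def)
  have "walk V E (rev p @ tl q)"
    using walk_append_tl[OF walk_rev[OF sym p(1)] q(1)] p(2) q(2) ne by (simp add: last_rev)
  moreover have "hd (rev p @ tl q) = u" "last (rev p @ tl q) = v"
    using last_append_tl[of "rev p" q] p q ne by (simp_all add: hd_rev last_rev)
  ultimately show "\<exists>p. walk V E p \<and> hd p = u \<and> last p = v"
    by blast
qed

definition traverses :: "'a list \<Rightarrow> 'a \<Rightarrow> 'a \<Rightarrow> bool" where
  "traverses p u v \<longleftrightarrow> (\<exists>i. Suc i < length p \<and> {p ! i, p ! Suc i} = {u, v})"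

lemma nsp_edge_traverses:
  "nsp_edge V E k l u v = card {p \<in> shortest_paths V E k l. traverses p u v}"
  by (simp add: nsp_edge_def traverses_def)

lemma traverses_rev: "traverses (rev p) u v \<longleftrightarrow> traverses p u v"
proof -
  have *: "traverses (rev p) u v" if tr: "traverses p u v" for p :: "'a list"
  proof -
    obtain i where i: "Suc i < length p" "{p ! i, p ! Suc i} = {u, v}"
      using tr unfolding traverses_def by blast
    define j where "j = length p - Suc (Suc i)"
    have "rev p ! j = p ! Suc i" "rev p ! Suc j = p ! i"
      using i(1) by (simp_all add: rev_nth j_def Suc_diff_Suc)
    then show ?thesis
      unfolding traverses_def using i by (intro exI[of _ j]) (auto simp: j_def insert_commute)
  qed
  show ?thesis using *[of p] *[of "rev p"] by auto
qed

lemma traverses_hd_iff: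
  assumes "distinct p" "2 \<le> length p" "v \<noteq> hd p"
  shows "traverses p (hd p) v \<longleftrightarrow> v = p ! 1"
proof -
  have hd: "hd p = p ! 0" using assms(2) by (intro hd_conv_nth) auto
  have at_0: "p ! i = p ! 0 \<longleftrightarrow> i = 0" if "i < length p" for i
    by (rule nth_eq_iff_index_eq[OF assms(1)]) (use that in auto)
  show ?thesis
  proof
    assume "traverses p (hd p) v"
    then obtain i where i: "Suc i < length p" "{p ! i, p ! Suc i} = {hd p, v}"
      unfolding traverses_def by blast
    then have "p ! i = hd p" "p ! Suc i = v"
      using at_0[of "Suc i"] hd by (auto simp: doubleton_eq_iff)
    then show "v = p ! 1"
      using at_0[of i] i(1) hd by auto
  next
    assume "v = p ! 1"
    then show "traverses p (hd p) v"
      unfolding traverses_def using assms(2) hd by (intro exI[of _ 0]) auto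
  qed
qed

lemma traverses_map:
  assumes "inj_on s V" "set p \<subseteq> V" "u \<in> V" "v \<in> V"
  shows "traverses (map s p) (s u) (s v) \<longleftrightarrow> traverses p u v"
proof -
  have "{s (p ! i), s (p ! Suc i)} = {s u, s v} \<longleftrightarrow> {p ! i, p ! Suc i} = {u, v}"
    if "Suc i < length p" for i
  proof -
    have "s x = s y \<longleftrightarrow> x = y" if "x \<in> V" "y \<in> V" for x y
      using assms(1) that by (meson inj_on_eq_iff)
    moreover have "p ! i \<in> V" "p ! Suc i \<in> V"
      using assms(2) that by auto
    ultimately show ?thesis
      using assms(3,4) by (auto simp: doubleton_eq_iff)
  qed
  then have "\<forall>i. Suc i < length p \<longrightarrow>
      ({map s p ! i, map s p ! Suc i} = {s u, s v}) = ({p ! i, p ! Suc i} = {u, v})"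
    by simp
  then show ?thesis
    unfolding traverses_def length_map by blast
qed

locale connected_simple_graph =
  fixes V :: "'a set" and E :: "'a \<Rightarrow> 'a \<Rightarrow> bool"
  assumes simple: "simple_graph V E" and connected: "connected_graph V E"
begin

lemma finite_V: "finite V"
  using simple by (simp add: simple_graph_def)

lemma edge_in_V: "E x y \<Longrightarrow> x \<in> V \<and> y \<in> V"
  using simple by (simp add: simple_graph_def)

lemma edge_sym: "E x y \<Longrightarrow> E y x"
  using simple by (simp add: simple_graph_def)

lemma edge_irrefl: "\<not> E x x"
  using simple by (simp add: simple_graph_def)

abbreviation nbrs :: "'a \<Rightarrow> 'a set" where
  "nbrs u \<equiv> {v \<in> V. E u v}"

lemma gdist_le_walk: "walk V E p \<Longrightarrow> hd p = u \<Longrightarrow> last p = v \<Longrightarrow> gdist V E u v \<le> length p - 1"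
  unfolding gdist_def by (rule Least_le) (rule exI[of _ p], auto simp: walk_def)

lemma shortest_path_exists:
  assumes "u \<in> V" "v \<in> V"
  shows "\<exists>p. p \<in> shortest_paths V E u v"
proof -
  obtain p where "walk V E p" "hd p = u" "last p = v"
    using connected assms by (auto simp: connected_graph_def)
  then have "\<exists>k p. walk V E p \<and> hd p = u \<and> last p = v \<and> length p = Suc k"
    by (intro exI[of _ "length p - 1"] exI[of _ p]) (auto simp: walk_def)
  then have "\<exists>p. walk V E p \<and> hd p = u \<and> last p = v \<and> length p = Suc (gdist V E u v)"
    unfolding gdist_def by (rule LeastI_ex)
  then show ?thesis
    by (simp add: shortest_paths_def)
qed

lemma shortest_pathsD:
  assumes "p \<in> shortest_paths V E k l"
  shows "walk V E p" "hd p = k" "last p = l" "length p = Suc (gdist V E k l)"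
  using assms by (auto simp: shortest_paths_def)

lemma finite_shortest_paths: "finite (shortest_paths V E u v)"
proof -
  have "shortest_paths V E u v \<subseteq> {xs. set xs \<subseteq> V \<and> length xs = Suc (gdist V E u v)}"
    by (auto simp: shortest_paths_def walk_def)
  then show ?thesis
    using finite_lists_length_eq[OF finite_V] finite_subset by blast
qed

lemma nsp_pos: "u \<in> V \<Longrightarrow> v \<in> V \<Longrightarrow> 0 < nsp V E u v"
  unfolding nsp_def using shortest_path_exists[of u v] finite_shortest_paths[of u v]
  by (auto simp: card_gt_0_iff)

lemma gdist_self: "u \<in> V \<Longrightarrow> gdist V E u u = 0"
  using gdist_le_walk[of "[u]" u u] by simp

lemma gdist_pos:
  assumes "u \<in> V" "v \<in> V" "u \<noteq> v"
  shows "0 < gdist V E u v"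
proof -
  obtain p where "p \<in> shortest_paths V E u v"
    using shortest_path_exists assms(1,2) by blast
  note sp = shortest_pathsD[OF this]
  show ?thesis
  proof (rule ccontr)
    assume "\<not> 0 < gdist V E u v"
    then obtain x where "p = [x]"
      using sp(4) by (auto simp: length_Suc_conv)
    then show False
      using sp(2,3) assms(3) by simp
  qed
qed

lemma walk_rev_endpoints:
  assumes "walk V E p"
  shows "walk V E (rev p)" "hd (rev p) = last p" "last (rev p) = hd p"
proof -
  show "walk V E (rev p)"
    by (rule walk_rev) (auto simp: edge_sym assms)
  show "hd (rev p) = last p" "last (rev p) = hd p"
    using assms by (auto simp: hd_rev last_rev walk_def)
qed

lemma gdist_commute_le:
  assumes "u \<in> V" "v \<in> V"
  shows "gdist V E v u \<le> gdist V E u v"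
proof -
  obtain p where p: "p \<in> shortest_paths V E u v"
    using shortest_path_exists assms by blast
  note sp = shortest_pathsD[OF p]
  show ?thesis
    using gdist_le_walk[OF walk_rev_endpoints[OF sp(1)]] sp by simp
qed

lemma gdist_commute: "u \<in> V \<Longrightarrow> v \<in> V \<Longrightarrow> gdist V E v u = gdist V E u v"
  using gdist_commute_le by (simp add: le_antisym)

lemma rev_in_shortest_paths:
  assumes "p \<in> shortest_paths V E k l"
  shows "rev p \<in> shortest_paths V E l k"
proof -
  note sp = shortest_pathsD[OF assms]
  have "k \<in> V" "l \<in> V"
    using sp(1,2,3) by (auto simp: walk_def)
  then show ?thesis
    using walk_rev_endpoints[OF sp(1)] sp gdist_commute by (simp add: shortest_paths_def)
qed

lemma shortest_paths_swap: "shortest_paths V E l k = rev ` shortest_paths V E k l"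
proof (intro equalityI subsetI)
  fix p
  assume "p \<in> shortest_paths V E l k"
  then show "p \<in> rev ` shortest_paths V E k l"
    using rev_in_shortest_paths by (metis image_eqI rev_rev_ident)
qed (auto intro: rev_in_shortest_paths)

lemma nsp_commute: "nsp V E l k = nsp V E k l"
  unfolding nsp_def shortest_paths_swap[of l k] by (simp add: card_image)

lemma nsp_edge_commute: "nsp_edge V E l k u v = nsp_edge V E k l u v"
proof -
  have "{p \<in> shortest_paths V E l k. traverses p u v} = rev ` {p \<in> shortest_paths V E k l. traverses p u v}"
    unfolding shortest_paths_swap[of l k] by (auto simp: traverses_rev)
  then show ?thesis
    unfolding nsp_edge_traverses by (simp add: card_image)
qed

text \<open>A shortcut between two occurrences of a repeated vertex would give a shorter walk.\<close>
lemma distinct_shortest_path: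
  assumes p: "p \<in> shortest_paths V E k l"
  shows "distinct p"
proof (rule ccontr)
  assume "\<not> distinct p"
  then obtain i j where ij: "i < j" "j < length p" "p ! i = p ! j"
    by (metis distinct_conv_nth linorder_neqE_nat)
  let ?q = "take (Suc i) p @ tl (drop j p)"
  note sp = shortest_pathsD[OF p]
  have lt: "last (take (Suc i) p) = p ! i"
    using ij by (simp add: take_Suc_conv_app_nth)
  have hdd: "hd (drop j p) = p ! j"
    using ij by (simp add: hd_drop_conv_nth)
  have "walk V E ?q"
    using walk_append_tl[OF walk_take[OF sp(1)] walk_drop[OF sp(1)]] lt hdd ij by simp
  moreover have "hd ?q = k"
    using sp(2) ij by (cases p) auto
  moreover have "last ?q = l"
    using last_append_tl[of "take (Suc i) p" "drop j p"] lt hdd ij sp(3)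
    by (simp add: last_drop) (metis gr_implies_not0 list.size(3))
  ultimately have "gdist V E k l \<le> length ?q - 1"
    by (rule gdist_le_walk)
  then show False
    using sp(4) ij by simp
qed

lemma gdist_shortest_path_nth:
  assumes p: "p \<in> shortest_paths V E u w" and i: "i < length p"
  shows "gdist V E u (p ! i) = i"
proof -
  note sp = shortest_pathsD[OF p]
  have wt: "walk V E (take (Suc i) p)"
    using walk_take[OF sp(1)] by simp
  have lt: "last (take (Suc i) p) = p ! i"
    using i by (simp add: take_Suc_conv_app_nth)
  have hu: "hd (take (Suc i) p) = u"
    using sp(2) i by (cases p) auto
  have le: "gdist V E u (p ! i) \<le> i"
    using gdist_le_walk[OF wt hu lt] i by simp
  have "i \<le> gdist V E u (p ! i)"
  proof -
    have V: "u \<in> V" "p ! i \<in> V"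
      using sp(1) hu wt i by (auto simp: walk_def dest: hd_in_set)
    obtain q where q: "q \<in> shortest_paths V E u (p ! i)"
      using shortest_path_exists[OF V] by blast
    note sq = shortest_pathsD[OF q]
    have "q \<noteq> []"
      using sq(4) by auto
    have hdd: "hd (drop i p) = p ! i"
      using i by (simp add: hd_drop_conv_nth)
    have "walk V E (q @ tl (drop i p))"
      using walk_append_tl[OF sq(1) walk_drop[OF sp(1) i]] sq(3) hdd by simp
    moreover have "hd (q @ tl (drop i p)) = u"
      using sq(2,4) by (cases q) auto
    moreover have "last (q @ tl (drop i p)) = w"
      using \<open>q \<noteq> []\<close>
        last_append_tl[of q "drop i p"] sq(3) hdd i sp(3) by (simp add: last_drop)
    ultimately have "gdist V E u w \<le> length (q @ tl (drop i p)) - 1"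
      by (rule gdist_le_walk)
    then show ?thesis
      using sq(4) sp(4) i by simp
  qed
  then show ?thesis
    using le by simp
qed

text \<open>Every distance up to the eccentricity of u is realised along a shortest path to a farthest vertex.\<close>
lemma gdist_image:
  assumes u: "u \<in> V" and ne: "V - {u} \<noteq> {}"
  shows "gdist V E u ` (V - {u}) = {1..Max (gdist V E u ` (V - {u}))}"
proof (intro equalityI subsetI)
  let ?W = "V - {u}"
  have fin: "finite (gdist V E u ` ?W)"
    using finite_V by simp
  fix i
  assume "i \<in> gdist V E u ` ?W"
  then obtain w where "w \<in> ?W" "i = gdist V E u w"
    by blast
  then show "i \<in> {1..Max (gdist V E u ` ?W)}"
    using fin gdist_pos[OF u, of w] by (auto simp: Suc_le_eq)
next
  let ?W = "V - {u}"
  fix i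
  assume i: "i \<in> {1..Max (gdist V E u ` ?W)}"
  have "Max (gdist V E u ` ?W) \<in> gdist V E u ` ?W"
    using finite_V ne by (intro Max_in) auto
  then obtain w where w: "w \<in> ?W" "gdist V E u w = Max (gdist V E u ` ?W)"
    by (metis (no_types, lifting) imageE)
  obtain p where p: "p \<in> shortest_paths V E u w"
    using shortest_path_exists u w(1) by blast
  have il: "i < length p"
    using shortest_pathsD(4)[OF p] w(2) i by simp
  have "p ! i \<in> V"
    using shortest_pathsD(1)[OF p] il by (auto simp: walk_def)
  moreover have "gdist V E u (p ! i) = i"
    using gdist_shortest_path_nth[OF p il] .
  moreover have "p ! i \<noteq> u"
    using calculation(2) gdist_self[OF u] i by auto
  ultimately show "i \<in> gdist V E u ` ?W"
    by (metis DiffI image_eqI singletonD)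
qed

lemma length_shortest_path_ge_2:
  assumes "p \<in> shortest_paths V E k l" "k \<in> V" "l \<in> V" "k \<noteq> l"
  shows "2 \<le> length p"
  using shortest_pathsD(4)[OF assms(1)] gdist_pos[OF assms(2-4)] by simp

text \<open>Each shortest path leaving u traverses exactly one edge at u, its first one.\<close>
lemma sum_nsp_edge_source:
  assumes "u \<in> V" "l \<in> V" "l \<noteq> u"
  shows "(\<Sum>v\<in>nbrs u. nsp_edge V E u l u v) = nsp V E u l"
proof -
  have "card {v \<in> nbrs u. traverses p u v} = 1" if p: "p \<in> shortest_paths V E u l" for p
  proof -
    note sp = shortest_pathsD[OF p]
    have len: "2 \<le> length p"
      using length_shortest_path_ge_2[OF p] assms by auto
    have "p ! 0 = u"
      using sp(2) len hd_conv_nth[of p] by fastforce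
    then have "E u (p ! 1)"
      using sp(1) len by (auto simp: walk_def)
    moreover have "traverses p u v \<longleftrightarrow> v = p ! 1" if "E u v" for v
      using traverses_hd_iff[OF distinct_shortest_path[OF p] len, of v] sp(2) edge_irrefl[of u] that
      by metis
    ultimately have "{v \<in> nbrs u. traverses p u v} = {p ! 1}"
      using edge_in_V by auto
    then show ?thesis
      by simp
  qed
  then show ?thesis
    unfolding nsp_edge_traverses nsp_def
    by (intro sum_multicount[where k = 1, simplified]) (auto simp: finite_V finite_shortest_paths)
qed

text \<open>A leaf could only be entered and left through its single neighbour.\<close>
lemma nsp_edge_leaf:
  assumes leaf: "nbrs u = {w}" and "k \<noteq> u" "l \<noteq> u"
  shows "nsp_edge V E k l u v = 0"
proof -
  have "\<not> traverses p u v" if p: "p \<in> shortest_paths V E k l" for p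
  proof
    assume "traverses p u v"
    then obtain i where i: "Suc i < length p" "{p ! i, p ! Suc i} = {u, v}"
      unfolding traverses_def by blast
    then obtain j where j: "j < length p" "p ! j = u"
      by (metis Suc_lessD doubleton_eq_iff lessI order.strict_trans)
    note sp = shortest_pathsD[OF p]
    have "j \<noteq> 0"
      using sp(2) j assms(2) by (metis hd_conv_nth list.size(3) not_less0)
    moreover have "j \<noteq> length p - 1"
      using sp(3) j assms(3) by (metis last_conv_nth list.size(3) not_less0)
    ultimately have j1: "0 < j" "Suc j < length p"
      using j by auto
    have only_w: "x = w" if "E u x" for x
      using leaf edge_in_V that by auto
    have "E (p ! (j - 1)) (p ! Suc (j - 1))" "E (p ! j) (p ! Suc j)"
      using sp(1) j1 unfolding walk_def by (simp_all del: Suc_pred)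
    then have "p ! (j - 1) = w" "p ! Suc j = w"
      using only_w edge_sym j j1 by auto
    then have "j - 1 = Suc j"
      using nth_eq_iff_index_eq[OF distinct_shortest_path[OF p], of "j - 1" "Suc j"] j1 by simp
    then show False
      by simp
  qed
  then have "{p \<in> shortest_paths V E k l. traverses p u v} = {}"
    by blast
  then show ?thesis
    unfolding nsp_edge_traverses by (simp only: card.empty)
qed

lemma card_traversed_arcs:
  assumes p: "p \<in> shortest_paths V E k l"
  shows "card {a \<in> Sigma V nbrs. traverses p (fst a) (snd a)} = 2 * gdist V E k l"
proof -
  let ?d = "gdist V E k l"
  let ?f = "\<lambda>i. (p ! i, p ! Suc i)" and ?g = "\<lambda>i. (p ! Suc i, p ! i)"
  note sp = shortest_pathsD[OF p]
  have edge: "E (p ! i) (p ! Suc i)" if "i < ?d" for i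
    using sp(1,4) that unfolding walk_def by simp
  have eq: "{a \<in> Sigma V nbrs. traverses p (fst a) (snd a)} = ?f ` {..<?d} \<union> ?g ` {..<?d}"
  proof (intro equalityI subsetI)
    fix a
    assume "a \<in> {a \<in> Sigma V nbrs. traverses p (fst a) (snd a)}"
    then obtain i where i: "Suc i < length p" "{p ! i, p ! Suc i} = {fst a, snd a}"
      unfolding traverses_def by blast
    then have "a = ?f i \<or> a = ?g i"
      by (cases a) (auto simp: doubleton_eq_iff)
    then show "a \<in> ?f ` {..<?d} \<union> ?g ` {..<?d}"
      using i sp(4) by auto
  next
    fix a
    assume "a \<in> ?f ` {..<?d} \<union> ?g ` {..<?d}"
    then obtain i where i: "i < ?d" "a = ?f i \<or> a = ?g i"
      by blast
    then show "a \<in> {a \<in> Sigma V nbrs. traverses p (fst a) (snd a)}"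
      using edge[OF i(1)] edge_sym[OF edge[OF i(1)]] edge_in_V sp(4)
      unfolding traverses_def by (auto intro!: exI[of _ i] simp: insert_commute)
  qed
  have inj: "p ! i = p ! j \<Longrightarrow> i < length p \<Longrightarrow> j < length p \<Longrightarrow> i = j" for i j
    using nth_eq_iff_index_eq[OF distinct_shortest_path[OF p]] by simp
  have "inj_on ?f {..<?d}" "inj_on ?g {..<?d}"
    using inj sp(4) by (auto intro!: inj_onI)
  moreover have "?f ` {..<?d} \<inter> ?g ` {..<?d} = {}"
  proof (rule ccontr)
    assume "?f ` {..<?d} \<inter> ?g ` {..<?d} \<noteq> {}"
    then obtain i j where "i < ?d" "j < ?d" "p ! i = p ! Suc j" "p ! Suc i = p ! j"
      by auto
    then have "i = Suc j" "Suc i = j"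
      using inj sp(4) by auto
    then show False
      by simp
  qed
  ultimately show ?thesis
    unfolding eq by (simp add: card_Un_disjoint card_image)
qed

lemma sum_nsp_edge:
  assumes "k \<in> V" "l \<in> V"
  shows "(\<Sum>u\<in>V. \<Sum>v\<in>nbrs u. nsp_edge V E k l u v) = 2 * gdist V E k l * nsp V E k l"
proof -
  have "(\<Sum>u\<in>V. \<Sum>v\<in>nbrs u. nsp_edge V E k l u v) = (\<Sum>a\<in>Sigma V nbrs. nsp_edge V E k l (fst a) (snd a))"
    using finite_V by (simp add: sum.Sigma case_prod_beta)
  also have "\<dots> = (\<Sum>a\<in>Sigma V nbrs. card {p \<in> shortest_paths V E k l. traverses p (fst a) (snd a)})"
    by (simp add: nsp_edge_traverses)
  also have "\<dots> = 2 * gdist V E k l * nsp V E k l"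
    unfolding nsp_def
    by (rule sum_multicount) (use finite_V finite_shortest_paths card_traversed_arcs in auto)
  finally show ?thesis .
qed

end

definition pair_exp_load :: "'a set \<Rightarrow> ('a \<Rightarrow> 'a \<Rightarrow> bool) \<Rightarrow> real \<Rightarrow> 'a \<Rightarrow> 'a \<Rightarrow> 'a \<Rightarrow> real" where
  "pair_exp_load V E lam u k l =
     (\<Sum>v\<in>{v \<in> V. E u v}. real (nsp_edge V E k l u v)) / real (nsp V E k l) * lam ^ gdist V E k l"

definition exp_reach :: "'a set \<Rightarrow> ('a \<Rightarrow> 'a \<Rightarrow> bool) \<Rightarrow> real \<Rightarrow> 'a \<Rightarrow> real" where
  "exp_reach V E lam u = (\<Sum>l\<in>V - {u}. lam ^ gdist V E u l)"

lemma exp_c_eq_sum_pair_exp_load: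
  "exp_c V E lam u = (1/2) * (\<Sum>k\<in>V. \<Sum>l\<in>V - {k}. pair_exp_load V E lam u k l)"
proof -
  let ?f = "\<lambda>v k l. real (nsp_edge V E k l u v) / real (nsp V E k l) * lam ^ gdist V E k l"
  have "exp_c V E lam u = (1/2) * (\<Sum>v\<in>{v \<in> V. E u v}. \<Sum>k\<in>V. \<Sum>l\<in>V - {k}. ?f v k l)"
    by (simp add: exp_c_def exp_edge_betw_def sum_distrib_left)
  also have "\<dots> = (1/2) * (\<Sum>k\<in>V. \<Sum>v\<in>{v \<in> V. E u v}. \<Sum>l\<in>V - {k}. ?f v k l)"
    by (subst sum.swap) (rule refl)
  also have "\<dots> = (1/2) * (\<Sum>k\<in>V. \<Sum>l\<in>V - {k}. \<Sum>v\<in>{v \<in> V. E u v}. ?f v k l)"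
    by (subst (2) sum.swap) (rule refl)
  also have "\<dots> = (1/2) * (\<Sum>k\<in>V. \<Sum>l\<in>V - {k}. pair_exp_load V E lam u k l)"
    by (simp add: pair_exp_load_def sum_divide_distrib sum_distrib_right)
  finally show ?thesis .
qed

context connected_simple_graph
begin

lemma pair_exp_load_commute:
  "k \<in> V \<Longrightarrow> l \<in> V \<Longrightarrow> pair_exp_load V E lam u l k = pair_exp_load V E lam u k l"
  by (simp add: pair_exp_load_def nsp_edge_commute nsp_commute gdist_commute)

lemma pair_exp_load_source:
  assumes "u \<in> V" "l \<in> V" "l \<noteq> u"
  shows "pair_exp_load V E lam u u l = lam ^ gdist V E u l"
proof -
  have "(\<Sum>v\<in>nbrs u. real (nsp_edge V E u l u v)) = real (nsp V E u l)"
    using sum_nsp_edge_source[OF assms] by (metis of_nat_sum)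
  then show ?thesis
    using nsp_pos[OF assms(1,2)] by (simp add: pair_exp_load_def)
qed

lemma pair_exp_load_nonneg: "0 < lam \<Longrightarrow> 0 \<le> pair_exp_load V E lam u k l"
  by (simp add: pair_exp_load_def sum_nonneg)

lemma exp_c_split:
  assumes u: "u \<in> V"
  shows "exp_c V E lam u = exp_reach V E lam u
    + (1/2) * (\<Sum>k\<in>V - {u}. \<Sum>l\<in>V - {k} - {u}. pair_exp_load V E lam u k l)"
proof -
  let ?load = "pair_exp_load V E lam u"
  have endpoint: "?load k u = lam ^ gdist V E u k" "?load u k = lam ^ gdist V E u k"
    if "k \<in> V - {u}" for k
    using pair_exp_load_source[of u k] pair_exp_load_commute[of u k] u that by auto
  have "(\<Sum>k\<in>V. \<Sum>l\<in>V - {k}. ?load k l)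
      = (\<Sum>l\<in>V - {u}. ?load u l) + (\<Sum>k\<in>V - {u}. \<Sum>l\<in>V - {k}. ?load k l)"
    using sum.remove[OF finite_V u] by simp
  also have "(\<Sum>k\<in>V - {u}. \<Sum>l\<in>V - {k}. ?load k l)
      = (\<Sum>k\<in>V - {u}. ?load k u + (\<Sum>l\<in>V - {k} - {u}. ?load k l))"
  proof (intro sum.cong refl)
    fix k
    assume "k \<in> V - {u}"
    then show "(\<Sum>l\<in>V - {k}. ?load k l) = ?load k u + (\<Sum>l\<in>V - {k} - {u}. ?load k l)"
      using sum.remove[of "V - {k}" u] finite_V u by auto
  qed
  finally show ?thesis
    unfolding exp_c_eq_sum_pair_exp_load exp_reach_def using endpoint
    by (simp add: sum.distrib)
qed

lemma exp_reach_le_exp_c: "u \<in> V \<Longrightarrow> 0 < lam \<Longrightarrow> exp_reach V E lam u \<le> exp_c V E lam u"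
  unfolding exp_c_split by (auto intro!: sum_nonneg pair_exp_load_nonneg)

lemma exp_c_leaf:
  assumes "u \<in> V" "nbrs u = {w}"
  shows "exp_c V E lam u = exp_reach V E lam u"
  using nsp_edge_leaf[OF assms(2)] unfolding exp_c_split[OF assms(1)] by (simp add: pair_exp_load_def)

lemma sum_pair_exp_load:
  assumes "k \<in> V" "l \<in> V"
  shows "(\<Sum>u\<in>V. pair_exp_load V E lam u k l) = 2 * real (gdist V E k l) * lam ^ gdist V E k l"
proof -
  have "(\<Sum>u\<in>V. pair_exp_load V E lam u k l)
      = real (\<Sum>u\<in>V. \<Sum>v\<in>nbrs u. nsp_edge V E k l u v) / real (nsp V E k l) * lam ^ gdist V E k l"
    by (simp add: pair_exp_load_def sum_divide_distrib sum_distrib_right)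
  also have "\<dots> = 2 * real (gdist V E k l) * lam ^ gdist V E k l"
    unfolding sum_nsp_edge[OF assms] using nsp_pos[OF assms] by simp
  finally show ?thesis .
qed

lemma sum_exp_c_eq_sum_exp_t: "(\<Sum>u\<in>V. exp_c V E lam u) = (\<Sum>u\<in>V. exp_t V E lam u)"
proof -
  have "(\<Sum>u\<in>V. exp_c V E lam u) = (1/2) * (\<Sum>u\<in>V. \<Sum>k\<in>V. \<Sum>l\<in>V - {k}. pair_exp_load V E lam u k l)"
    unfolding exp_c_eq_sum_pair_exp_load by (simp add: sum_distrib_left)
  also have "\<dots> = (1/2) * (\<Sum>k\<in>V. \<Sum>u\<in>V. \<Sum>l\<in>V - {k}. pair_exp_load V E lam u k l)"
    by (subst sum.swap) (rule refl)
  also have "\<dots> = (1/2) * (\<Sum>k\<in>V. \<Sum>l\<in>V - {k}. \<Sum>u\<in>V. pair_exp_load V E lam u k l)"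
    by (subst (2) sum.swap) (rule refl)
  also have "\<dots> = (\<Sum>k\<in>V. \<Sum>l\<in>V - {k}. real (gdist V E k l) * lam ^ gdist V E k l)"
    by (simp add: sum_pair_exp_load sum_distrib_left)
  finally show ?thesis
    by (simp add: exp_t_def)
qed

end

locale graph_automorphism = connected_simple_graph +
  fixes s :: "'a \<Rightarrow> 'a"
  assumes bij: "bij_betw s V V" and edge_map_iff: "\<forall>x\<in>V. \<forall>y\<in>V. E x y \<longleftrightarrow> E (s x) (s y)"
begin

lemma map_in_V: "x \<in> V \<Longrightarrow> s x \<in> V"
  using bij by (auto simp: bij_betw_def)

lemma inj_on_V: "inj_on s V"
  using bij by (simp add: bij_betw_def)

lemma inv_automorphism: "graph_automorphism V E (inv_into V s)"
proof unfold_locales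
  show "bij_betw (inv_into V s) V V"
    using bij_betw_inv_into[OF bij] bij by (simp add: bij_betw_def)
  have "inv_into V s x \<in> V" "s (inv_into V s x) = x" if "x \<in> V" for x
    using bij that by (auto simp: bij_betw_def inv_into_into f_inv_into_f)
  then show "\<forall>x\<in>V. \<forall>y\<in>V. E x y \<longleftrightarrow> E (inv_into V s x) (inv_into V s y)"
    using edge_map_iff by (metis (no_types, lifting))
qed

lemma walk_map_automorphism: "walk V E p \<Longrightarrow> walk V E (map s p)"
  using edge_map_iff map_in_V by (intro walk_map) auto

lemma gdist_map_le:
  assumes "k \<in> V" "l \<in> V"
  shows "gdist V E (s k) (s l) \<le> gdist V E k l"
proof -
  obtain p where "p \<in> shortest_paths V E k l"
    using shortest_path_exists assms by blast
  note sp = shortest_pathsD[OF this]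
  have "hd (map s p) = s k" "last (map s p) = s l"
    using sp(2,3,4) by (auto simp: hd_map last_map length_Suc_conv)
  then show ?thesis
    using gdist_le_walk[OF walk_map_automorphism[OF sp(1)]] sp(4) by simp
qed

lemma gdist_map:
  assumes "k \<in> V" "l \<in> V"
  shows "gdist V E (s k) (s l) = gdist V E k l"
proof -
  interpret inv: graph_automorphism V E "inv_into V s"
    by (rule inv_automorphism)
  have "gdist V E k l \<le> gdist V E (s k) (s l)"
    using inv.gdist_map_le[OF map_in_V[OF assms(1)] map_in_V[OF assms(2)]] inj_on_V assms by simp
  then show ?thesis
    using gdist_map_le[OF assms] by simp
qed

lemma map_in_shortest_paths:
  assumes p: "p \<in> shortest_paths V E k l" and "k \<in> V" "l \<in> V"
  shows "map s p \<in> shortest_paths V E (s k) (s l)"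
proof -
  note sp = shortest_pathsD[OF p]
  have "hd (map s p) = s k" "last (map s p) = s l"
    using sp(2,3,4) by (auto simp: hd_map last_map length_Suc_conv)
  then show ?thesis
    using walk_map_automorphism[OF sp(1)] sp(4) gdist_map assms by (simp add: shortest_paths_def)
qed

lemma shortest_paths_map:
  assumes "k \<in> V" "l \<in> V"
  shows "shortest_paths V E (s k) (s l) = map s ` shortest_paths V E k l"
proof (intro equalityI subsetI)
  interpret inv: graph_automorphism V E "inv_into V s"
    by (rule inv_automorphism)
  fix q
  assume q: "q \<in> shortest_paths V E (s k) (s l)"
  have "map (inv_into V s) q \<in> shortest_paths V E k l"
    using inv.map_in_shortest_paths[OF q] map_in_V inj_on_V assms by simp
  moreover have "map s (map (inv_into V s) q) = q"
    using shortest_pathsD(1)[OF q] bij by (auto simp: walk_def map_idI subset_iff bij_betw_inv_into_right)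
  ultimately show "q \<in> map s ` shortest_paths V E k l"
    by (metis image_eqI)
qed (use map_in_shortest_paths assms in auto)

lemma inj_on_map_shortest_paths: "inj_on (map s) (shortest_paths V E k l)"
proof (rule inj_onI)
  fix p q
  assume "p \<in> shortest_paths V E k l" "q \<in> shortest_paths V E k l" "map s p = map s q"
  moreover have "set p \<union> set q \<subseteq> V"
    using calculation(1,2) by (auto simp: shortest_paths_def walk_def)
  ultimately show "p = q"
    using map_inj_on inj_on_V inj_on_subset by metis
qed

lemma nsp_map: "k \<in> V \<Longrightarrow> l \<in> V \<Longrightarrow> nsp V E (s k) (s l) = nsp V E k l"
  unfolding nsp_def by (simp add: shortest_paths_map card_image inj_on_map_shortest_paths)

lemma nsp_edge_map:
  assumes "k \<in> V" "l \<in> V" "u \<in> V" "v \<in> V"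
  shows "nsp_edge V E (s k) (s l) (s u) (s v) = nsp_edge V E k l u v"
proof -
  have "traverses (map s p) (s u) (s v) = traverses p u v" if "p \<in> shortest_paths V E k l" for p
    using traverses_map[OF inj_on_V _ assms(3,4)] shortest_pathsD(1)[OF that] by (simp add: walk_def)
  then have "{q \<in> shortest_paths V E (s k) (s l). traverses q (s u) (s v)}
      = map s ` {p \<in> shortest_paths V E k l. traverses p u v}"
    unfolding shortest_paths_map[OF assms(1,2)] by blast
  moreover have "inj_on (map s) {p \<in> shortest_paths V E k l. traverses p u v}"
    by (rule inj_on_subset[OF inj_on_map_shortest_paths]) blast
  ultimately show ?thesis
    unfolding nsp_edge_traverses by (simp add: card_image)
qed

lemma bij_betw_remove: "k \<in> V \<Longrightarrow> bij_betw s (V - {k}) (V - {s k})"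
  by (rule bij_betw_DiffI[OF bij bij_betw_singletonI[OF refl]]) (auto simp: map_in_V)

lemma exp_edge_betw_map:
  assumes "u \<in> V" "v \<in> V"
  shows "exp_edge_betw V E lam (s u) (s v) = exp_edge_betw V E lam u v"
proof -
  let ?f = "\<lambda>u v k l. real (nsp_edge V E k l u v) / real (nsp V E k l) * lam ^ gdist V E k l"
  have "(\<Sum>k\<in>V. \<Sum>l\<in>V - {k}. ?f (s u) (s v) k l) = (\<Sum>k\<in>V. \<Sum>l\<in>V - {s k}. ?f (s u) (s v) (s k) l)"
    by (rule sum.reindex_bij_betw[OF bij, symmetric])
  also have "\<dots> = (\<Sum>k\<in>V. \<Sum>l\<in>V - {k}. ?f (s u) (s v) (s k) (s l))"
    by (intro sum.cong refl sum.reindex_bij_betw[OF bij_betw_remove, symmetric]) simp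
  also have "\<dots> = (\<Sum>k\<in>V. \<Sum>l\<in>V - {k}. ?f u v k l)"
    using nsp_edge_map nsp_map gdist_map assms by (intro sum.cong refl) auto
  finally show ?thesis
    by (simp add: exp_edge_betw_def)
qed

lemma nbrs_map:
  assumes "u \<in> V"
  shows "bij_betw s (nbrs u) (nbrs (s u))"
proof -
  have "s ` nbrs u = nbrs (s u)"
  proof (intro equalityI subsetI)
    fix x
    assume "x \<in> s ` nbrs u"
    then show "x \<in> nbrs (s u)"
      using edge_map_iff map_in_V assms by auto
  next
    fix x
    assume x: "x \<in> nbrs (s u)"
    then obtain y where "y \<in> V" "x = s y"
      using bij by (auto simp: bij_betw_def)
    then show "x \<in> s ` nbrs u"
      using x edge_map_iff assms by auto
  qed
  then show ?thesis
    using inj_on_subset[OF inj_on_V] by (auto simp: bij_betw_def)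
qed

lemma exp_c_map: "u \<in> V \<Longrightarrow> exp_c V E lam (s u) = exp_c V E lam u"
  unfolding exp_c_def
  by (subst sum.reindex_bij_betw[OF nbrs_map, symmetric]) (auto intro!: sum.cong exp_edge_betw_map)

lemma exp_t_map: "u \<in> V \<Longrightarrow> exp_t V E lam (s u) = exp_t V E lam u"
  unfolding exp_t_def
  by (subst sum.reindex_bij_betw[OF bij_betw_remove, symmetric]) (auto intro!: sum.cong simp: gdist_map)

lemma networkness_map: "u \<in> V \<Longrightarrow> networkness V E lam (s u) = networkness V E lam u"
  by (simp add: networkness_def exp_c_map exp_t_map)

end

lemma geometric_sum_Ico:
  fixes lam :: real
  assumes "1 \<le> D"
  shows "(\<Sum>i\<in>{1..<D}. lam ^ i) * (lam - 1) = lam ^ D - lam"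
  using assms
proof (induction D rule: dec_induct)
  case (step D)
  then show ?case
    by (simp add: algebra_simps)
qed simp

lemma arith_geometric_sum_Ico:
  fixes lam :: real
  assumes "1 \<le> D"
  shows "(\<Sum>i\<in>{1..<D}. real i * lam ^ i) * (lam - 1)^2
    = lam - real D * lam ^ D + (real D - 1) * lam ^ (D + 1)"
  using assms
proof (induction D rule: dec_induct)
  case (step D)
  then show ?case
    by (simp add: power2_eq_square algebra_simps)
qed simp

lemma sum_min_split:
  fixes f :: "nat \<Rightarrow> real"
  assumes "1 \<le> D" "D \<le> Suc m"
  shows "(\<Sum>i=1..m. f (min i D)) = (\<Sum>i\<in>{1..<D}. f i) + real (Suc m - D) * f D"
proof -
  have "{1..m} = {1..<D} \<union> {D..m}" "{1..<D} \<inter> {D..m} = {}"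
    using assms by auto
  then have "(\<Sum>i=1..m. f (min i D)) = (\<Sum>i\<in>{1..<D}. f (min i D)) + (\<Sum>i=D..m. f (min i D))"
    by (simp add: sum.union_disjoint)
  also have "\<dots> = (\<Sum>i\<in>{1..<D}. f i) + (\<Sum>i=D..m. f D)"
    by (intro arg_cong2[where f = "(+)"] sum.cong) auto
  finally show ?thesis
    using assms by simp
qed

text \<open>The non-start vertices of a broom with parameter D on m + 1 vertices lie at distances
  min i D from the start vertex, i = 1..m; these sums are exp_reach and exp_t there.\<close>
definition clipped_power_sum :: "nat \<Rightarrow> real \<Rightarrow> nat \<Rightarrow> real" where
  "clipped_power_sum m lam D = (\<Sum>i=1..m. lam ^ min i D)"

definition clipped_weighted_power_sum :: "nat \<Rightarrow> real \<Rightarrow> nat \<Rightarrow> real" where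
  "clipped_weighted_power_sum m lam D = (\<Sum>i=1..m. real (min i D) * lam ^ min i D)"

lemma clipped_weighted_power_sum_pos:
  "0 < lam \<Longrightarrow> 1 \<le> m \<Longrightarrow> 1 \<le> D \<Longrightarrow> 0 < clipped_weighted_power_sum m lam D"
  unfolding clipped_weighted_power_sum_def by (intro sum_pos) auto

lemma clipped_power_sum_le_weighted:
  "0 < lam \<Longrightarrow> 1 \<le> D \<Longrightarrow> clipped_power_sum m lam D \<le> clipped_weighted_power_sum m lam D"
  unfolding clipped_power_sum_def clipped_weighted_power_sum_def by (intro sum_mono) auto

lemma lb_fun_eq_clipped:
  assumes "1 \<le> D" "D < n" "lam \<noteq> 1"
  shows "lb_fun n lam D = clipped_power_sum (n - 1) lam D / clipped_weighted_power_sum (n - 1) lam D"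
proof -
  define A where "A = (\<Sum>i\<in>{1..<D}. lam ^ i)"
  define B where "B = (\<Sum>i\<in>{1..<D}. real i * lam ^ i)"
  define m where "m = real (n - D)"
  have m: "0 < m"
    using assms(2) by (simp add: m_def)
  have "(lam ^ D - lam) / (lam - 1) = A"
    using geometric_sum_Ico[OF assms(1), of lam] assms(3) by (simp add: A_def field_simps)
  moreover have "(lam - real D * lam ^ D + (real D - 1) * lam ^ (D + 1)) / (lam - 1)^2 = B"
    using arith_geometric_sum_Ico[OF assms(1), of lam] assms(3) by (simp add: B_def field_simps)
  ultimately have "lb_fun n lam D = (lam ^ D + A / m) / (real D * lam ^ D + B / m)"
    by (simp add: lb_fun_def m_def)
  also have "\<dots> = (A + m * lam ^ D) / (B + m * (real D * lam ^ D))"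
  proof -
    have "lam ^ D + A / m = (A + m * lam ^ D) / m" "real D * lam ^ D + B / m = (B + m * (real D * lam ^ D)) / m"
      using m by (simp_all add: field_simps)
    then show ?thesis
      using m by simp
  qed
  also have "\<dots> = clipped_power_sum (n - 1) lam D / clipped_weighted_power_sum (n - 1) lam D"
    unfolding clipped_power_sum_def clipped_weighted_power_sum_def A_def B_def m_def
    using sum_min_split[of D "n - 1" "\<lambda>i. lam ^ i"] sum_min_split[of D "n - 1" "\<lambda>i. real i * lam ^ i"] assms
    by simp
  finally show ?thesis .
qed

lemma Min_lb_fun_le:
  assumes "3 \<le> n" "0 < lam" "lam \<noteq> 1" "1 \<le> j" "j < n"
  shows "Min (lb_fun n lam ` {2..n - 1}) \<le> lb_fun n lam j"
proof (cases "j = 1")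
  case True
  have "Min (lb_fun n lam ` {2..n - 1}) \<le> lb_fun n lam 2"
    using assms(1) by (intro Min_le) auto
  also have "\<dots> \<le> 1"
    using lb_fun_eq_clipped[of 2 n lam] clipped_power_sum_le_weighted[of lam 2 "n - 1"]
      clipped_weighted_power_sum_pos[of lam "n - 1" 2] assms by simp
  also have "\<dots> = lb_fun n lam j"
    using True assms(2) by (simp add: lb_fun_def)
  finally show ?thesis .
next
  case False
  then show ?thesis
    using assms by (intro Min_le) auto
qed

text \<open>Every level 1..e is taken at least once, by the representatives inv_into W d i; the values
  of h at the remaining card W - e elements are bounded by the maximum h j.\<close>
lemma sum_le_clipped_sum:
  fixes h :: "nat \<Rightarrow> real" and d :: "'a \<Rightarrow> nat"
  assumes "finite W" "d ` W = {1..e}" "j \<in> {1..e}" "\<forall>i\<in>{1..e}. h i \<le> h j"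
  shows "(\<Sum>w\<in>W. h (d w)) \<le> (\<Sum>i=1..card W. h (min i j))"
proof -
  define G where "G = inv_into W d ` {1..e}"
  have G: "G \<subseteq> W" "inj_on (inv_into W d) {1..e}"
    using assms(2) unfolding G_def by (auto intro!: inv_into_into inj_on_inv_into)
  have d_G: "d (inv_into W d i) = i" if "i \<in> {1..e}" for i
    using assms(2) that by (simp add: f_inv_into_f)
  have card_G: "card G = e"
    using card_image[OF G(2)] by (simp add: G_def)
  have e_le: "e \<le> card W"
    using card_mono[OF assms(1) G(1)] card_G by simp
  have "(\<Sum>w\<in>W. h (d w)) = (\<Sum>w\<in>G. h (d w)) + (\<Sum>w\<in>W - G. h (d w))"
    using sum.subset_diff[OF G(1) assms(1), of "\<lambda>w. h (d w)"] by linarith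
  also have "(\<Sum>w\<in>G. h (d w)) = (\<Sum>i=1..e. h i)"
    unfolding G_def sum.reindex[OF G(2)] using d_G by (intro sum.cong) auto
  also have "\<dots> \<le> (\<Sum>i=1..e. h (min i j))"
    using assms(3,4) by (intro sum_mono) (auto simp: min_def)
  also have "(\<Sum>w\<in>W - G. h (d w)) \<le> (\<Sum>w\<in>W - G. h j)"
    using assms(2,4) by (intro sum_mono) auto
  also have "\<dots> = (\<Sum>i\<in>{e<..card W}. h (min i j))"
    using card_Diff_subset[OF finite_subset[OF G(1) assms(1)] G(1)] card_G assms(3) by simp
  also have "(\<Sum>i=1..e. h (min i j)) + \<dots> = (\<Sum>i=1..card W. h (min i j))"
    using e_le by (subst sum.union_disjoint[symmetric]) (auto intro!: sum.cong)
  finally show ?thesis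
    by simp
qed

lemma exists_clipped_ratio_le:
  fixes d :: "'a \<Rightarrow> nat" and lam :: real
  assumes fin: "finite W" and ne: "W \<noteq> {}" and levels: "d ` W = {1..e}" and lam: "0 < lam"
  shows "\<exists>j\<in>{1..e}. clipped_power_sum (card W) lam j / clipped_weighted_power_sum (card W) lam j
           \<le> (\<Sum>w\<in>W. lam ^ d w) / (\<Sum>w\<in>W. real (d w) * lam ^ d w)"
proof -
  define S0 where "S0 = (\<Sum>w\<in>W. lam ^ d w)"
  define S1 where "S1 = (\<Sum>w\<in>W. real (d w) * lam ^ d w)"
  define h where "h i = (real i - S1 / S0) * lam ^ i" for i
  have pos_d: "1 \<le> d w" if "w \<in> W" for w
    using levels that by auto
  have "0 < S0"
    unfolding S0_def using fin ne lam by (intro sum_pos) auto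
  have "0 < S1"
    unfolding S1_def using fin ne lam pos_d by (intro sum_pos) (auto intro!: mult_pos_pos simp: Suc_le_eq)
  have "{1..e} \<noteq> {}"
    using levels ne by auto
  then obtain j where j: "j \<in> {1..e}" "h j = Max (h ` {1..e})"
    by (metis (no_types, lifting) Max_in finite_atLeastAtMost finite_imageI image_iff image_is_empty)
  then have "\<forall>i\<in>{1..e}. h i \<le> h j"
    by simp
  then have "(\<Sum>w\<in>W. h (d w)) \<le> (\<Sum>i=1..card W. h (min i j))"
    by (rule sum_le_clipped_sum[OF fin levels j(1)])
  moreover have "(\<Sum>w\<in>W. h (d w)) = S1 - S1 / S0 * S0"
    unfolding h_def S0_def S1_def by (simp add: left_diff_distrib sum_subtractf sum_distrib_left mult.assoc)
  moreover have "S1 - S1 / S0 * S0 = 0"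
    using \<open>0 < S0\<close> by simp
  moreover have "(\<Sum>i=1..card W. h (min i j)) = clipped_weighted_power_sum (card W) lam j
      - S1 / S0 * clipped_power_sum (card W) lam j"
    unfolding h_def clipped_power_sum_def clipped_weighted_power_sum_def
    by (simp add: algebra_simps sum_subtractf sum_distrib_left)
  ultimately have "S1 / S0 * clipped_power_sum (card W) lam j \<le> clipped_weighted_power_sum (card W) lam j"
    by linarith
  moreover have "0 < clipped_weighted_power_sum (card W) lam j"
    using clipped_weighted_power_sum_pos[of lam "card W" j] lam fin ne j(1)
    by (simp add: Suc_le_eq card_gt_0_iff)
  ultimately have "clipped_power_sum (card W) lam j / clipped_weighted_power_sum (card W) lam j \<le> S0 / S1"
    using \<open>0 < S0\<close> \<open>0 < S1\<close> by (simp add: field_simps)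
  then show ?thesis
    using j(1) unfolding S0_def S1_def by blast
qed

context connected_simple_graph
begin

lemma exp_t_pos:
  assumes "u \<in> V" "2 \<le> card V" "0 < lam"
  shows "0 < exp_t V E lam u"
proof -
  have "card (V - {u}) \<noteq> 0"
    using assms(1,2) finite_V by simp
  then obtain v where v: "v \<in> V - {u}"
    by (metis card.empty ex_in_conv)
  then have "0 < gdist V E u v"
    using gdist_pos[of u v] assms(1) by auto
  then have "0 < real (gdist V E u v) * lam ^ gdist V E u v"
    using assms(3) by simp
  then show ?thesis
    unfolding exp_t_def using finite_V v assms(1,3) by (intro sum_pos2[OF _ v]) auto
qed

lemma Min_lb_fun_le_networkness:
  assumes u: "u \<in> V" and card: "3 \<le> card V" and lam: "0 < lam" "lam \<noteq> 1"
  shows "Min (lb_fun (card V) lam ` {2..card V - 1}) \<le> networkness V E lam u"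
proof -
  let ?W = "V - {u}" and ?e = "Max (gdist V E u ` (V - {u}))"
  have card_W: "card ?W = card V - 1"
    using u finite_V by simp
  have W_ne: "?W \<noteq> {}"
  proof
    assume empty: "?W = {}"
    have "card V - 1 = 0"
      using card_W unfolding empty by simp
    then show False
      using card by simp
  qed
  have levels: "gdist V E u ` ?W = {1..?e}"
    by (rule gdist_image[OF u W_ne])
  obtain j where j: "j \<in> {1..?e}"
    and le: "clipped_power_sum (card ?W) lam j / clipped_weighted_power_sum (card ?W) lam j
      \<le> exp_reach V E lam u / exp_t V E lam u"
    using exists_clipped_ratio_le[OF _ W_ne levels lam(1)] finite_V
    unfolding exp_reach_def exp_t_def by auto
  have "?e = card {1..?e}"
    by simp
  also have "\<dots> \<le> card ?W"
    unfolding levels[symmetric] using finite_V by (intro card_image_le) auto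
  finally have j_lt: "j < card V"
    using j card_W card by auto
  have "Min (lb_fun (card V) lam ` {2..card V - 1}) \<le> lb_fun (card V) lam j"
    using Min_lb_fun_le[OF card lam] j j_lt by auto
  also have "\<dots> \<le> exp_reach V E lam u / exp_t V E lam u"
    using lb_fun_eq_clipped[of j "card V" lam] j j_lt lam le card_W by auto
  also have "\<dots> \<le> networkness V E lam u"
    unfolding networkness_def using exp_reach_le_exp_c[OF u lam(1)] exp_t_pos[OF u _ lam(1)] card
    by (simp add: divide_right_mono)
  finally show ?thesis .
qed

lemma Min_lb_fun_le_min_networkness:
  assumes "3 \<le> card V" "0 < lam" "lam \<noteq> 1"
  shows "Min (lb_fun (card V) lam ` {2..card V - 1}) \<le> min_networkness V E lam"
  unfolding min_networkness_def using assms finite_V Min_lb_fun_le_networkness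
  by (intro Min.boundedI) auto

lemma min_networkness_le_1:
  assumes "2 \<le> card V" "0 < lam"
  shows "min_networkness V E lam \<le> 1"
proof -
  have "\<exists>u\<in>V. networkness V E lam u \<le> 1"
  proof (rule ccontr)
    assume "\<not> (\<exists>u\<in>V. networkness V E lam u \<le> 1)"
    then have "\<forall>u\<in>V. exp_t V E lam u < exp_c V E lam u"
      using exp_t_pos[OF _ assms] by (auto simp: networkness_def not_le less_divide_eq)
    then have "(\<Sum>u\<in>V. exp_t V E lam u) < (\<Sum>u\<in>V. exp_c V E lam u)"
      using finite_V assms(1) by (intro sum_strict_mono) auto
    then show False
      using sum_exp_c_eq_sum_exp_t by simp
  qed
  then show ?thesis
    unfolding min_networkness_def using finite_V by (meson Min_le dual_order.trans finite_imageI imageI)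
qed

lemma min_networkness_vertex_transitive:
  assumes vt: "vertex_transitive V E" and "2 \<le> card V" "0 < lam"
  shows "min_networkness V E lam = 1"
proof -
  obtain u0 where u0: "u0 \<in> V"
    using assms(2) by fastforce
  define x where "x = networkness V E lam u0"
  have eq: "networkness V E lam u = x" if u: "u \<in> V" for u
  proof -
    obtain s where "bij_betw s V V" "\<forall>x\<in>V. \<forall>y\<in>V. E x y \<longleftrightarrow> E (s x) (s y)" "s u0 = u"
      using vt u0 u unfolding vertex_transitive_def by blast
    then interpret graph_automorphism V E s
      by unfold_locales
    show ?thesis
      using networkness_map[OF u0] \<open>s u0 = u\<close> by (simp add: x_def)
  qed
  have "exp_c V E lam u = x * exp_t V E lam u" if "u \<in> V" for u
    using eq[OF that] exp_t_pos[OF that assms(2,3)] by (simp add: networkness_def field_simps)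
  then have "(\<Sum>u\<in>V. exp_c V E lam u) = x * (\<Sum>u\<in>V. exp_t V E lam u)"
    by (simp add: sum_distrib_left)
  then have "(\<Sum>u\<in>V. exp_t V E lam u) = x * (\<Sum>u\<in>V. exp_t V E lam u)"
    by (simp add: sum_exp_c_eq_sum_exp_t)
  moreover have "0 < (\<Sum>u\<in>V. exp_t V E lam u)"
    using finite_V u0 exp_t_pos[OF _ assms(2,3)] by (intro sum_pos) auto
  ultimately have "x = 1"
    by simp
  then have "networkness V E lam ` V = {1}"
    using eq u0 by auto
  then show ?thesis
    unfolding min_networkness_def by simp
qed

end

lemma broom_simple: "simple_graph (broom_V n) (broom_E n D)"
  unfolding simple_graph_def broom_V_def broom_E_def by auto

definition broom_path :: "nat \<Rightarrow> nat \<Rightarrow> nat list" where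
  "broom_path D i = (if i \<le> D then [0..<Suc i] else [0..<D] @ [i])"

lemma walk_broom_upt:
  assumes "i \<le> D" "i < n"
  shows "walk (broom_V n) (broom_E n D) [0..<Suc i]"
  unfolding walk_def broom_V_def
proof (intro conjI allI impI)
  fix k
  assume k: "Suc k < length [0..<Suc i]"
  then have "[0..<Suc i] ! k = k" "[0..<Suc i] ! Suc k = Suc k"
    by (simp_all del: upt_Suc)
  then show "broom_E n D ([0..<Suc i] ! k) ([0..<Suc i] ! Suc k)"
    using k assms by (simp del: upt_Suc add: broom_E_def)
qed (use assms in auto)

lemma broom_path:
  assumes "2 \<le> D" "D < n" "i < n"
  shows "walk (broom_V n) (broom_E n D) (broom_path D i)" "hd (broom_path D i) = 0"
    "last (broom_path D i) = i" "length (broom_path D i) = Suc (min i D)"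
proof -
  have "walk (broom_V n) (broom_E n D) ([0..<D] @ [i])" if "D < i"
  proof (rule walk_append)
    show "walk (broom_V n) (broom_E n D) [0..<D]"
      using walk_broom_upt[of "D - 1" D n] assms by (simp add: Suc_diff_le)
    show "walk (broom_V n) (broom_E n D) [i]" "broom_E n D (last [0..<D]) (hd [i])"
      using assms that by (auto simp: broom_V_def broom_E_def)
  qed
  then show "walk (broom_V n) (broom_E n D) (broom_path D i)"
    using walk_broom_upt[of i D n] assms by (auto simp: broom_path_def)
qed (use assms in \<open>auto simp: broom_path_def hd_append\<close>)

lemma broom_connected:
  assumes "2 \<le> D" "D < n"
  shows "connected_graph (broom_V n) (broom_E n D)"
  using broom_path[OF assms] by (intro connected_graphI_root[where r = 0]) (auto simp: broom_E_def broom_V_def)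

lemma walk_broom_min_le:
  assumes "walk (broom_V n) (broom_E n D) p" "hd p = 0"
  shows "k < length p \<Longrightarrow> min (p ! k) D \<le> k"
proof (induction k)
  case 0
  then show ?case
    using assms by (cases p) auto
next
  case (Suc k)
  then have "broom_E n D (p ! k) (p ! Suc k)"
    using assms(1) unfolding walk_def by blast
  then show ?case
    using Suc by (auto simp: broom_E_def)
qed

lemma broom_gdist:
  assumes "2 \<le> D" "D < n" "i < n"
  shows "gdist (broom_V n) (broom_E n D) 0 i = min i D"
proof -
  interpret connected_simple_graph "broom_V n" "broom_E n D"
    using broom_simple broom_connected[OF assms(1,2)] by unfold_locales
  have le: "gdist (broom_V n) (broom_E n D) 0 i \<le> min i D"
    using gdist_le_walk[OF broom_path(1-3)[OF assms]] broom_path(4)[OF assms] by simp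
  obtain p where "p \<in> shortest_paths (broom_V n) (broom_E n D) 0 i"
    using shortest_path_exists assms by (auto simp: broom_V_def)
  note sp = shortest_pathsD[OF this]
  have "p \<noteq> []"
    using sp(4) by auto
  then have "last p = p ! (length p - 1)"
    by (rule last_conv_nth)
  then have "min i D \<le> length p - 1"
    using walk_broom_min_le[OF sp(1,2), of "length p - 1"] sp(3,4) by simp
  then show ?thesis
    using le sp(4) by simp
qed

lemma broom_networkness_start:
  assumes "2 \<le> D" "D < n" "lam \<noteq> 1"
  shows "networkness (broom_V n) (broom_E n D) lam 0 = lb_fun n lam D"
proof -
  interpret connected_simple_graph "broom_V n" "broom_E n D"
    using broom_simple broom_connected[OF assms(1,2)] by unfold_locales
  have V: "broom_V n - {0} = {1..n - 1}"
    using assms by (auto simp: broom_V_def)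
  have gd: "gdist (broom_V n) (broom_E n D) 0 l = min l D" if "l \<in> {1..n - 1}" for l
    using broom_gdist[OF assms(1,2), of l] that assms(2) by force
  have "exp_c (broom_V n) (broom_E n D) lam 0 = exp_reach (broom_V n) (broom_E n D) lam 0"
    using assms by (intro exp_c_leaf[where w = 1]) (auto simp: broom_V_def broom_E_def)
  also have "\<dots> = clipped_power_sum (n - 1) lam D"
    unfolding exp_reach_def clipped_power_sum_def V using gd by simp
  moreover have "exp_t (broom_V n) (broom_E n D) lam 0 = clipped_weighted_power_sum (n - 1) lam D"
    unfolding exp_t_def clipped_weighted_power_sum_def V using gd by simp
  ultimately show ?thesis
    unfolding networkness_def using lb_fun_eq_clipped[of D n lam] assms by simp
qed

theorem theorem9:
  fixes V :: "'a set" and E :: "'a \<Rightarrow> 'a \<Rightarrow> bool" and lam :: real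
  assumes "0 < lam" and "lam < 1"
    and "simple_graph V E" and "connected_graph V E" and "card V \<ge> 3"
  shows "Min (lb_fun (card V) lam ` {2..card V - 1}) \<le> min_networkness V E lam
       \<and> min_networkness V E lam \<le> 1
       \<and> (\<exists>D\<in>{2..card V - 1}.
            networkness (broom_V (card V)) (broom_E (card V) D) lam 0
              = Min (lb_fun (card V) lam ` {2..card V - 1})
          \<and> min_networkness (broom_V (card V)) (broom_E (card V) D) lam
              = Min (lb_fun (card V) lam ` {2..card V - 1}))
       \<and> (vertex_transitive V E \<longrightarrow> min_networkness V E lam = 1)"
proof -
  interpret connected_simple_graph V E
    using assms(3,4) by unfold_locales
  let ?n = "card V"
  let ?M = "Min (lb_fun ?n lam ` {2..?n - 1})"
  obtain D where D: "D \<in> {2..?n - 1}" "lb_fun ?n lam D = ?M"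
    using Min_in[of "lb_fun ?n lam ` {2..?n - 1}"] assms(5) by fastforce
  then have D_bounds: "2 \<le> D" "D < ?n"
    using assms(5) by auto
  interpret broom: connected_simple_graph "broom_V ?n" "broom_E ?n D"
    using broom_simple broom_connected[OF D_bounds] by unfold_locales
  have start: "networkness (broom_V ?n) (broom_E ?n D) lam 0 = ?M"
    using broom_networkness_start[OF D_bounds] D(2) assms(2) by simp
  have "?M \<le> min_networkness (broom_V ?n) (broom_E ?n D) lam"
    using broom.Min_lb_fun_le_min_networkness assms by (simp add: broom_V_def)
  moreover have "min_networkness (broom_V ?n) (broom_E ?n D) lam \<le> ?M"
    unfolding min_networkness_def start[symmetric] using D_bounds by (intro Min_le) (auto simp: broom_V_def)
  ultimately have "min_networkness (broom_V ?n) (broom_E ?n D) lam = ?M"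
    by simp
  then show ?thesis
    using Min_lb_fun_le_min_networkness min_networkness_le_1 min_networkness_vertex_transitive
      D(1) start assms by auto
qed

end
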